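(* For every integer $n\ge 1$, $$C_n=\frac{1}{\pi}\int_0^{\infty}\frac{t^2}{\left(t^2+\frac14\right)^2}\left[\left(2-\frac{1}{\sqrt{t^2+\frac14}}\right)^{n-1}+\left(2+\frac{1}{\sqrt{t^2+\frac14}}\right)^{n-1}\right]\mathrm{d}t .$$
   Context: $C_n=\frac{1}{n+1}\binom{2n}{n}$ denotes the $n$-th Catalan number ($n\ge 0$). *)

theory Defs
  imports "HOL-Analysis.Analysis"
begin

definition catalan :: "nat \<Rightarrow> real" where
  "catalan n = real ((2*n) choose n) / real (n+1)"

end

theory Submission
  imports Defs
begin

text \<open>The substitution \<open>x = 2 \<mp> 1/\<surd>(t\<^sup>2 + 1/4)\<close> maps \<open>t \<in> (0,\<infinity>)\<close>
  onto each half of \<open>(0,4)\<close> and turns the integral into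
  \<open>1/2 \<integral>\<^sub>0\<^sup>4 x\<^sup>n\<^sup>-\<^sup>1 \<surd>(4x - x\<^sup>2) dx\<close>, a moment of the semicircle density on
  \<open>[0,4]\<close>. Integrating by parts gives explicit primitives of \<open>x\<^sup>k \<surd>(4x - x\<^sup>2)\<close>
  whose increments over \<open>[0,4]\<close> obey the Catalan recurrence
  \<open>C\<^sub>k\<^sub>+\<^sub>1 = (4k+2)/(k+2) C\<^sub>k\<close>, so the moment equals \<open>2\<pi> C\<^sub>n\<close>.\<close>

lemma catalan_fact: "catalan n = fact (2*n) / (fact n * fact (Suc n))"
  unfolding catalan_def by (simp add: binomial_fact field_simps mult_2)

lemma catalan_Suc: "catalan (Suc n) = (4 * real n + 2) / (real n + 2) * catalan n"
proof -
  have "fact (2 * Suc n) = ((2 * real n + 2) * (2 * real n + 1)) * fact (2*n)"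
    using fact_Suc[of "Suc (2*n)"] fact_Suc[of "2*n"] by (simp add: algebra_simps)
  moreover have "fact (Suc n) * fact (Suc (Suc n))
      = ((real n + 2) * (real n + 1)) * (fact n * fact (Suc n))"
    using fact_Suc[of "Suc n"] fact_Suc[of n] by (simp add: algebra_simps)
  moreover have "(2 * real n + 2) * (2 * real n + 1) / ((real n + 2) * (real n + 1))
      = (4 * real n + 2) / (real n + 2)"
    by (simp add: divide_simps add_pos_pos) (simp add: algebra_simps)
  ultimately show ?thesis
    unfolding catalan_fact by (metis times_divide_times_eq)
qed

definition semicircle :: "real \<Rightarrow> real" where
  "semicircle x = sqrt (4*x - x^2)"

lemma semicircle_square:
  assumes "0 \<le> x" "x \<le> 4" shows "semicircle x ^ 2 = 4*x - x^2"
proof -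
  have "0 \<le> x * (4 - x)" using assms by simp
  then show ?thesis unfolding semicircle_def by (simp add: power2_eq_square algebra_simps)
qed

lemma semicircle_pos: "0 < x \<Longrightarrow> x < 4 \<Longrightarrow> 0 < semicircle x"
  unfolding semicircle_def by (simp add: power2_eq_square)

lemma semicircle_centered:
  "semicircle (2 + s) = sqrt (4 - s^2)" "semicircle (2 - s) = sqrt (4 - s^2)"
  unfolding semicircle_def by (simp_all add: power2_eq_square algebra_simps)

lemma has_real_derivative_semicircle:
  assumes "0 < x" "x < 4" shows "(semicircle has_real_derivative (2 - x) / semicircle x) (at x)"
proof -
  have "0 < 4*x - x^2" using semicircle_pos[OF assms] by (simp add: semicircle_def)
  then show ?thesis unfolding semicircle_def
    by (auto intro!: derivative_eq_intros simp: field_simps)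
qed

lemma semicircle_as_arcsin_root: "sqrt (1 - ((x - 2) / 2)^2) = semicircle x / 2"
proof -
  have "sqrt (1 - ((x - 2) / 2)^2) = sqrt ((4*x - x^2) / 4)"
    by (rule arg_cong[where f = sqrt]) (simp add: field_simps power2_eq_square)
  then show ?thesis unfolding semicircle_def by (simp add: real_sqrt_divide)
qed

text \<open>Integration by parts gives the reduction formula
  \<open>(k+3) \<integral> x\<^sup>k\<^sup>+\<^sup>1 v = (4k+6) \<integral> x\<^sup>k v - x\<^sup>k v\<^sup>3\<close>
  for \<open>v = semicircle x\<close>.\<close>
fun moment_primitive :: "nat \<Rightarrow> real \<Rightarrow> real" where
  "moment_primitive 0 x = (x - 2) * semicircle x / 2 + 2 * arcsin ((x - 2) / 2)"
| "moment_primitive (Suc k) x =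
     ((4 * real k + 6) * moment_primitive k x - x^k * semicircle x ^ 3) / (real k + 3)"

lemma has_real_derivative_moment_primitive:
  assumes "0 < x" "x < 4"
  shows "(moment_primitive m has_real_derivative x^m * semicircle x) (at x)"
proof (induction m)
  case 0
  have v: "0 < semicircle x" "semicircle x ^ 2 = 4*x - x^2"
    using assms semicircle_pos semicircle_square by auto
  have "(moment_primitive 0 has_real_derivative
      (semicircle x + (x - 2) * ((2 - x) / semicircle x)) / 2
      + 2 * (inverse (sqrt (1 - ((x - 2) / 2)^2)) * (1/2))) (at x)"
    unfolding moment_primitive.simps(1)[abs_def] using assms
    by (auto intro!: derivative_eq_intros has_real_derivative_semicircle)
  moreover have "(semicircle x + (x - 2) * ((2 - x) / semicircle x)) / 2
      + 2 * (inverse (sqrt (1 - ((x - 2) / 2)^2)) * (1/2)) = semicircle x"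
    unfolding semicircle_as_arcsin_root using v by (simp add: field_simps power2_eq_square)
  ultimately show ?case by (simp del: moment_primitive.simps)
next
  case (Suc k)
  have v: "0 < semicircle x" "semicircle x ^ 2 = 4*x - x^2"
    using assms semicircle_pos semicircle_square by auto
  have "(moment_primitive (Suc k) has_real_derivative
      ((4 * real k + 6) * (x^k * semicircle x)
       - (real k * x^(k - 1) * semicircle x ^ 3
          + x^k * (3 * semicircle x ^ 2 * ((2 - x) / semicircle x)))) / (real k + 3)) (at x)"
    unfolding moment_primitive.simps(2)[abs_def] using assms Suc
    by (auto intro!: derivative_eq_intros has_real_derivative_semicircle)
  moreover have "((4 * real k + 6) * (x^k * semicircle x)
       - (real k * x^(k - 1) * semicircle x ^ 3
          + x^k * (3 * semicircle x ^ 2 * ((2 - x) / semicircle x)))) / (real k + 3)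
      = x ^ Suc k * semicircle x"
  proof -
    have cube: "semicircle x ^ 3 = x * (4 - x) * semicircle x"
      using v(2) by (simp add: power3_eq_cube flip: power2_eq_square)
        (simp add: algebra_simps power2_eq_square)
    have "real k * x^(k - 1) * semicircle x ^ 3 = real k * x^k * (4 - x) * semicircle x"
      by (cases k) (simp_all only: cube, simp_all add: algebra_simps)
    moreover have "x^k * (3 * semicircle x ^ 2 * ((2 - x) / semicircle x))
        = 3 * (2 - x) * x^k * semicircle x"
      using v(1) by (simp add: power2_eq_square)
    ultimately show ?thesis by (simp add: field_simps)
  qed
  ultimately show ?case by (rule DERIV_cong)
qed

lemma continuous_on_moment_primitive: "continuous_on {0..4} (moment_primitive m)"
  by (induction m) (auto simp: semicircle_def intro!: continuous_intros)

lemma moment_primitive_increment: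
  "moment_primitive m 4 - moment_primitive m 0 = 2 * pi * catalan (Suc m)"
proof (induction m)
  case 0
  show ?case by (simp add: semicircle_def catalan_def)
next
  case (Suc k)
  have "moment_primitive (Suc k) 4 - moment_primitive (Suc k) 0
      = (4 * real k + 6) / (real k + 3) * (moment_primitive k 4 - moment_primitive k 0)"
    by (simp add: semicircle_def diff_divide_distrib right_diff_distrib)
  also have "\<dots> = 2 * pi * catalan (Suc (Suc k))"
    unfolding Suc catalan_Suc[of "Suc k"] by (simp add: field_simps)
  finally show ?case .
qed

lemma has_integral_FTC_nonneg_at_top:
  fixes f F :: "real \<Rightarrow> real"
  assumes F_cont: "continuous_on {0..} F"
    and F_deriv: "\<And>x. 0 < x \<Longrightarrow> (F has_real_derivative f x) (at x)"
    and f_cont: "\<And>x. 0 < x \<Longrightarrow> isCont f x"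
    and f_nonneg: "\<And>x. 0 < x \<Longrightarrow> 0 \<le> f x"
    and F_lim: "(F \<longlongrightarrow> L) at_top"
  shows "(f has_integral (L - F 0)) {0..}"
proof -
  have "(F \<longlongrightarrow> F 0) (at 0 within {0..})"
    using F_cont by (simp add: continuous_on_def)
  then have F_0: "(F \<longlongrightarrow> F 0) (at_right 0)"
    by (rule tendsto_within_subset) auto
  have "set_integrable lborel (einterval 0 \<infinity>) f \<and>
      (LBINT x=0..\<infinity>. f x) = L - F 0"
    by (intro conjI interval_integral_FTC_nonneg[where F = F and A = "F 0" and B = L])
       (auto simp: zero_ereal_def ereal_tendsto_simps F_deriv f_cont f_nonneg F_0 F_lim)
  moreover have "einterval 0 \<infinity> = {0<..}" by (simp add: zero_ereal_def)
  ultimately have "(f has_integral (L - F 0)) {0<..}"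
    by (metis has_integral_integral interval_lebesgue_integral_0_infty
        set_borel_integral_eq_integral)
  moreover have "negligible {x \<in> {0..} - {0<..}. f x \<noteq> 0}"
    by (rule negligible_subset[of "{0}"]) auto
  moreover have "negligible {x \<in> {0<..} - {0..}. f x \<noteq> 0}"
    by (rule negligible_subset[of "{}"]) auto
  ultimately show ?thesis
    using has_integral_spike_set_eq by blast
qed

definition radius :: "real \<Rightarrow> real" where
  "radius t = sqrt (t^2 + 1/4)"

lemma radius_square: "radius t ^ 2 = t^2 + 1/4"
  unfolding radius_def by (simp add: add_nonneg_pos)

lemma radius_ge_half: "1/2 \<le> radius t"
proof -
  have "sqrt (1/4) \<le> radius t" unfolding radius_def by (rule real_sqrt_le_mono) simp
  then show ?thesis by (simp add: real_sqrt_divide)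
qed

lemma radius_gt_half: "t \<noteq> 0 \<Longrightarrow> 1/2 < radius t"
proof -
  assume "t \<noteq> 0"
  then have "sqrt (1/4) < radius t" unfolding radius_def by (subst real_sqrt_less_iff) simp
  then show ?thesis by (simp add: real_sqrt_divide)
qed

lemma has_real_derivative_inverse_radius:
  "((\<lambda>t. 1 / radius t) has_real_derivative - t / radius t ^ 3) (at t)"
proof -
  have r: "0 < radius t" using radius_ge_half[of t] by linarith
  have "0 < t^2 + 1/4" by (simp add: add_nonneg_pos)
  then have "((\<lambda>t. 1 / radius t) has_real_derivative
      - (inverse (radius t) / 2 * (2 * t)) / (radius t * radius t)) (at t)"
    unfolding radius_def by (auto intro!: derivative_eq_intros)
  moreover have "- (inverse (radius t) / 2 * (2 * t)) / (radius t * radius t) = - t / radius t ^ 3"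
    using r by (simp add: field_simps power3_eq_cube)
  ultimately show ?thesis by (rule DERIV_cong)
qed

lemma inverse_radius_tendsto_0: "((\<lambda>t. 1 / radius t) \<longlongrightarrow> 0) at_top"
proof -
  have "t \<le> radius t" for t
    using real_sqrt_le_mono[of "t^2" "t^2 + 1/4"] unfolding radius_def by (simp add: real_sqrt_abs)
  then have "filterlim radius at_top at_top"
    by (intro filterlim_at_top_mono[OF filterlim_ident] always_eventually) auto
  then show ?thesis
    by (intro tendsto_divide_0[OF tendsto_const] filterlim_at_top_imp_at_infinity)
qed

lemma semicircle_at_inverse_radius:
  assumes "0 \<le> t"
  shows "semicircle (2 - 1 / radius t) = 2 * t / radius t"
    and "semicircle (2 + 1 / radius t) = 2 * t / radius t"
proof -
  have r: "0 < radius t" using radius_ge_half[of t] by linarith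
  have "4 - (1 / radius t)^2 = (2 * t / radius t)^2"
    using r radius_square[of t] by (simp add: field_simps)
  then have "sqrt (4 - (1 / radius t)^2) = 2 * t / radius t"
    using r assms by simp
  then show "semicircle (2 - 1 / radius t) = 2 * t / radius t"
    and "semicircle (2 + 1 / radius t) = 2 * t / radius t"
    by (simp_all only: semicircle_centered)
qed

text \<open>As \<open>t\<close> runs over \<open>(0,\<infinity>)\<close>, \<open>2 - 1 / radius t\<close> sweeps \<open>(0,2)\<close>
  and \<open>2 + 1 / radius t\<close> sweeps \<open>(2,4)\<close>.\<close>
definition moment_pullback :: "nat \<Rightarrow> real \<Rightarrow> real" where
  "moment_pullback m t =
     (moment_primitive m (2 - 1 / radius t) - moment_primitive m (2 + 1 / radius t)) / 2"

definition moment_integrand :: "nat \<Rightarrow> real \<Rightarrow> real" where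
  "moment_integrand m t = t^2 / (t^2 + 1/4)^2 * ((2 - 1 / radius t)^m + (2 + 1 / radius t)^m)"

lemma isCont_moment_integrand: "isCont (moment_integrand m) t"
proof -
  have "0 < t^2 + 1/4" "0 < radius t"
    using radius_ge_half[of t] by (simp_all add: add_nonneg_pos)
  then show ?thesis
    unfolding moment_integrand_def[abs_def] radius_def by (intro continuous_intros) auto
qed

lemma moment_integrand_nonneg: "0 \<le> moment_integrand m t"
proof -
  have "1 / radius t \<le> 2" using radius_ge_half[of t] by (simp add: field_simps)
  then have "0 \<le> (2 - 1 / radius t)^m + (2 + 1 / radius t)^m"
    using radius_ge_half[of t] by (intro add_nonneg_nonneg zero_le_power) auto
  then show ?thesis unfolding moment_integrand_def by simp
qed

lemma has_real_derivative_moment_pullback: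
  assumes "0 < t"
  shows "(moment_pullback m has_real_derivative moment_integrand m t) (at t)"
proof -
  define r where "r = radius t"
  have r_gt: "1/2 < r" using radius_gt_half[of t] assms unfolding r_def by simp
  have "0 < 2 - 1/r" "2 - 1/r < 4" "0 < 2 + 1/r" "2 + 1/r < 4"
    using r_gt by (simp_all add: field_simps)
  then have "((\<lambda>t. moment_primitive m (2 - 1 / radius t)) has_real_derivative
        (2 - 1/r)^m * semicircle (2 - 1/r) * (0 - - t / r^3)) (at t)"
    and "((\<lambda>t. moment_primitive m (2 + 1 / radius t)) has_real_derivative
        (2 + 1/r)^m * semicircle (2 + 1/r) * (0 + - t / r^3)) (at t)"
    unfolding r_def
    by (intro DERIV_chain2[OF has_real_derivative_moment_primitive]
          DERIV_diff DERIV_add DERIV_const has_real_derivative_inverse_radius; simp)+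
  from DERIV_cdivide[OF DERIV_diff[OF this], of 2]
  have "(moment_pullback m has_real_derivative
      ((2 - 1/r)^m * semicircle (2 - 1/r) * (0 - - t / r^3)
       - (2 + 1/r)^m * semicircle (2 + 1/r) * (0 + - t / r^3)) / 2) (at t)"
    unfolding moment_pullback_def[abs_def] .
  moreover have "((2 - 1/r)^m * semicircle (2 - 1/r) * (0 - - t / r^3)
       - (2 + 1/r)^m * semicircle (2 + 1/r) * (0 + - t / r^3)) / 2
      = t^2 / (t^2 + 1/4)^2 * ((2 - 1/r)^m + (2 + 1/r)^m)"
  proof -
    have "semicircle (2 - 1/r) = 2 * t / r" "semicircle (2 + 1/r) = 2 * t / r"
      using semicircle_at_inverse_radius[of t] assms unfolding r_def by simp_all
    moreover have "(t^2 + 1/4)^2 = r^4" unfolding r_def radius_square[symmetric] by simp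
    ultimately show ?thesis
      using r_gt by (simp only:)
        (simp add: field_simps power2_eq_square power3_eq_cube power4_eq_xxxx)
  qed
  ultimately show ?thesis unfolding moment_integrand_def r_def by (rule DERIV_cong)
qed

lemma continuous_on_moment_pullback: "continuous_on UNIV (moment_pullback m)"
proof -
  have bounds: "radius t \<noteq> 0" "0 < 1 / radius t" "1 / radius t \<le> 2" for t
    using radius_ge_half[of t] by (auto simp: field_simps)
  have "continuous_on UNIV radius"
    unfolding radius_def[abs_def] by (intro continuous_intros)
  then have inv: "continuous_on UNIV (\<lambda>t. 1 / radius t)"
    using bounds(1) by (intro continuous_intros) auto
  have "2 - 1 / radius t \<in> {0..4}" "2 + 1 / radius t \<in> {0..4}" for t
    unfolding atLeastAtMost_iff using bounds(2,3)[of t] by linarith+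
  then have "continuous_on UNIV (\<lambda>t. moment_primitive m (2 - 1 / radius t))"
    and "continuous_on UNIV (\<lambda>t. moment_primitive m (2 + 1 / radius t))"
    by (auto intro!: continuous_on_compose2[OF continuous_on_moment_primitive] inv
          continuous_on_diff continuous_on_add continuous_on_const)
  then show ?thesis
    unfolding moment_pullback_def[abs_def] by (intro continuous_intros) auto
qed

lemma moment_pullback_0: "moment_pullback m 0 = - pi * catalan (Suc m)"
proof -
  have "1 / radius 0 = 2" unfolding radius_def by (simp add: real_sqrt_divide)
  then show ?thesis
    using moment_primitive_increment[of m] unfolding moment_pullback_def by simp
qed

lemma moment_pullback_tendsto_0: "(moment_pullback m \<longlongrightarrow> 0) at_top"
proof -
  have "isCont (moment_primitive m) 2"
    using has_real_derivative_moment_primitive[of 2 m] by (simp add: DERIV_isCont)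
  moreover have "((\<lambda>t. 2 - 1 / radius t) \<longlongrightarrow> 2) at_top"
    and "((\<lambda>t. 2 + 1 / radius t) \<longlongrightarrow> 2) at_top"
    using tendsto_diff[OF tendsto_const inverse_radius_tendsto_0, of 2]
      tendsto_add[OF tendsto_const inverse_radius_tendsto_0, of 2] by simp_all
  ultimately have
      "((\<lambda>t. moment_primitive m (2 - 1 / radius t)) \<longlongrightarrow> moment_primitive m 2) at_top"
    and "((\<lambda>t. moment_primitive m (2 + 1 / radius t)) \<longlongrightarrow> moment_primitive m 2) at_top"
    by (auto intro: isCont_tendsto_compose)
  from tendsto_divide[OF tendsto_diff[OF this] tendsto_const, of 2] show ?thesis
    unfolding moment_pullback_def[abs_def] by simp
qed

theorem mainTheorem1:
  fixes n :: nat
  assumes "n \<ge> 1"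
  shows "((\<lambda>t::real. t^2 / (t^2 + 1/4)^2 *
            ((2 - 1 / sqrt (t^2 + 1/4)) ^ (n - 1) + (2 + 1 / sqrt (t^2 + 1/4)) ^ (n - 1)))
          has_integral (pi * catalan n)) {0..}"
proof -
  obtain m where n: "n = Suc m" using assms by (cases n) auto
  have "(moment_integrand m has_integral (0 - moment_pullback m 0)) {0..}"
  proof (rule has_integral_FTC_nonneg_at_top)
    show "continuous_on {0..} (moment_pullback m)"
      using continuous_on_moment_pullback continuous_on_subset by blast
  qed (use has_real_derivative_moment_pullback isCont_moment_integrand moment_integrand_nonneg
         moment_pullback_tendsto_0 in auto)
  then show ?thesis
    unfolding moment_integrand_def[abs_def] moment_pullback_0 n radius_def by simp
qed

end
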